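(* Consider a deterministic online algorithm for minimizing total completion time on a single machine with job-size predictions, where all $n$ jobs are available at time $0$. If the algorithm uses at most $s$ preemptions in total on every instance with $n$ jobs whose predictions are exact (i.e. $\hat p_j=p_j$ for all $j$), then there exists an instance with $n$ jobs in which every job is overestimated ($\hat p_j\ge p_j$) on which the algorithm's total completion time is at least $\Omega\big(\frac{n-s}{s}\big)$ times the optimal total completion time.
   Context: A single machine processes at most one job at a time at unit speed; preemption is allowed. Each job $j$ has a processing requirement $p_j>0$ unknown to the algorithm until completion and a prediction $\hat p_j$ known at time $0$; $j$ completes at time $C_j$ once it has received $p_j$ units of processing. A preemption is an interruption of a job's processing before it completes. The optimal total completion time is that of the best offline schedule knowing all $p_j$. *)

theory Defs
  imports Complex_Main "HOL-Library.Extended_Real"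
begin

text \<open>Jobs are 0..<n. A schedule is an infinite sequence of segments
  (c, d, b): during a segment of length d the machine runs job c (None = idle);
  b says whether the job completed at the end of the segment.\<close>

type_synonym seg = "nat option \<times> real \<times> bool"

text \<open>A deterministic online algorithm: given the predictions and the history
  observed so far (segments with completion flags), it decides which job to run
  next (or idle) and for how long at most (it is reconsulted when the job
  completes or the time elapses).\<close>
type_synonym alg = "(nat \<Rightarrow> real) \<Rightarrow> seg list \<Rightarrow> nat option \<times> real"

definition processed :: "seg list \<Rightarrow> nat \<Rightarrow> real" where
  "processed h j = sum_list (map (\<lambda>(c, d, b). if c = Some j then d else 0) h)"

definition step :: "nat \<Rightarrow> (nat \<Rightarrow> real) \<Rightarrow> nat option \<times> real \<Rightarrow> seg list \<Rightarrow> seg" where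
  "step n p a h =
     (let c = fst a; l = max (snd a) 0 in
      case c of
        None \<Rightarrow> (None, l, False)
      | Some j \<Rightarrow>
          (if j < n \<and> processed h j < p j then
             (if p j - processed h j \<le> l then (Some j, p j - processed h j, True)
              else (Some j, l, False))
           else (None, l, False)))"

fun hist :: "nat \<Rightarrow> alg \<Rightarrow> (nat \<Rightarrow> real) \<Rightarrow> (nat \<Rightarrow> real) \<Rightarrow> nat \<Rightarrow> seg list" where
  "hist n A pr p 0 = []"
| "hist n A pr p (Suc k) =
     (let h = hist n A pr p k in h @ [step n p (A pr h) h])"

definition segs :: "nat \<Rightarrow> alg \<Rightarrow> (nat \<Rightarrow> real) \<Rightarrow> (nat \<Rightarrow> real) \<Rightarrow> nat \<Rightarrow> seg" where
  "segs n A pr p i = step n p (A pr (hist n A pr p i)) (hist n A pr p i)"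

definition completes :: "nat \<Rightarrow> alg \<Rightarrow> (nat \<Rightarrow> real) \<Rightarrow> (nat \<Rightarrow> real) \<Rightarrow> nat \<Rightarrow> nat \<Rightarrow> bool" where
  "completes n A pr p j i \<longleftrightarrow> fst (segs n A pr p i) = Some j \<and> snd (snd (segs n A pr p i))"

definition compl_time :: "nat \<Rightarrow> alg \<Rightarrow> (nat \<Rightarrow> real) \<Rightarrow> (nat \<Rightarrow> real) \<Rightarrow> nat \<Rightarrow> ereal" where
  "compl_time n A pr p j =
     (if \<exists>i. completes n A pr p j i
      then ereal (\<Sum>k\<le>(LEAST i. completes n A pr p j i). fst (snd (segs n A pr p k)))
      else \<infinity>)"

definition total_cost :: "nat \<Rightarrow> alg \<Rightarrow> (nat \<Rightarrow> real) \<Rightarrow> (nat \<Rightarrow> real) \<Rightarrow> ereal" where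
  "total_cost n A pr p = (\<Sum>j<n. compl_time n A pr p j)"

definition preempt_points :: "nat \<Rightarrow> alg \<Rightarrow> (nat \<Rightarrow> real) \<Rightarrow> (nat \<Rightarrow> real) \<Rightarrow> nat set" where
  "preempt_points n A pr p =
     {i. \<exists>j. fst (segs n A pr p i) = Some j \<and> \<not> snd (snd (segs n A pr p i))
            \<and> fst (segs n A pr p (Suc i)) \<noteq> Some j}"

definition preempt_le :: "nat \<Rightarrow> alg \<Rightarrow> (nat \<Rightarrow> real) \<Rightarrow> (nat \<Rightarrow> real) \<Rightarrow> nat \<Rightarrow> bool" where
  "preempt_le n A pr p s \<longleftrightarrow> finite (preempt_points n A pr p) \<and> card (preempt_points n A pr p) \<le> s"

text \<open>Offline optimum: best total completion time over all fixed (offline,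
  information-independent) segment plans.\<close>
definition opt_cost :: "nat \<Rightarrow> (nat \<Rightarrow> real) \<Rightarrow> ereal" where
  "opt_cost n p = Inf {total_cost n (\<lambda>_ h. \<sigma> (length h)) p p | \<sigma>. True}"

definition online_alg :: "alg \<Rightarrow> bool" where
  "online_alg A \<longleftrightarrow> (\<forall>pr h. snd (A pr h) > 0)"

end

theory Submission
  imports Defs
begin

text \<open>Run the algorithm on the instance where all sizes and predictions are 1; predictions are
  exact there, so it preempts at most \<open>s\<close> times. Stop at the first step after which it has worked
  for time \<open>s\<close>: fewer than \<open>s\<close> jobs are complete, at most \<open>s\<close> have been preempted and one is
  running, so at most \<open>2 s\<close> jobs have been started. The adversary keeps these at size 1, shrinks all
  other jobs to \<open>\<epsilon> = 1 / (n\<^sup>2 + 1)\<close> and leaves all predictions at 1. The algorithm cannot tell the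
  two instances apart before that step, so at least \<open>n - 2 s\<close> jobs complete after time \<open>s\<close> and it
  pays at least \<open>s (n - 2 s)\<close>, whereas running the tiny jobs first costs at most \<open>1 + 4 s\<^sup>2\<close>. For
  \<open>7 s \<le> 3 n\<close> the ratio is at least \<open>(n - s) / (24 s)\<close>; for fewer jobs that bound is below 1.\<close>

section \<open>Executions\<close>

abbreviation seg_len :: "seg \<Rightarrow> real" where
  "seg_len x \<equiv> fst (snd x)"

definition elapsed :: "nat \<Rightarrow> alg \<Rightarrow> (nat \<Rightarrow> real) \<Rightarrow> (nat \<Rightarrow> real) \<Rightarrow> nat \<Rightarrow> real" where
  "elapsed n A pr p k = (\<Sum>i<k. seg_len (segs n A pr p i))"

definition started :: "nat \<Rightarrow> alg \<Rightarrow> (nat \<Rightarrow> real) \<Rightarrow> (nat \<Rightarrow> real) \<Rightarrow> nat \<Rightarrow> nat set" where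
  "started n A pr p k = {j. \<exists>i<k. fst (segs n A pr p i) = Some j}"

definition completed :: "nat \<Rightarrow> alg \<Rightarrow> (nat \<Rightarrow> real) \<Rightarrow> (nat \<Rightarrow> real) \<Rightarrow> nat \<Rightarrow> nat set" where
  "completed n A pr p k = {j. \<exists>i<k. completes n A pr p j i}"

lemma length_hist [simp]: "length (hist n A pr p k) = k"
  by (induction k) (simp_all add: Let_def)

lemma hist_Suc_segs: "hist n A pr p (Suc k) = hist n A pr p k @ [segs n A pr p k]"
  by (simp add: Let_def segs_def)

lemma seg_len_step_nonneg: "seg_len (step n p a h) \<ge> 0"
  unfolding step_def Let_def by (auto split: option.splits)

lemma seg_len_segs_nonneg: "seg_len (segs n A pr p i) \<ge> 0"
  unfolding segs_def by (rule seg_len_step_nonneg)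

lemma fst_step_lessD: "fst (step n p a h) = Some j \<Longrightarrow> j < n"
  unfolding step_def Let_def by (auto split: option.splits if_splits)

lemma fst_segs_lessD: "fst (segs n A pr p i) = Some j \<Longrightarrow> j < n"
  unfolding segs_def by (rule fst_step_lessD)

lemma processed_hist:
  "processed (hist n A pr p k) j =
     (\<Sum>i<k. if fst (segs n A pr p i) = Some j then seg_len (segs n A pr p i) else 0)"
  by (induction k) (auto simp: hist_Suc_segs processed_def split: prod.splits simp del: hist.simps(2))

lemma processed_hist_mono:
  "k \<le> k' \<Longrightarrow> processed (hist n A pr p k) j \<le> processed (hist n A pr p k') j"
  unfolding processed_hist by (rule sum_mono2) (auto simp: seg_len_segs_nonneg)

lemma processed_append:
  "processed (h @ [x]) j = processed h j + (if fst x = Some j then seg_len x else 0)"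
  unfolding processed_def by (cases x) auto

lemma step_completes_remaining:
  "step n p a h = (Some j, d, True) \<Longrightarrow> d = p j - processed h j"
  unfolding step_def Let_def by (auto split: option.splits if_splits)

lemma processed_completes:
  assumes "completes n A pr p j i"
  shows "processed (hist n A pr p (Suc i)) j = p j"
proof -
  obtain d where seg: "segs n A pr p i = (Some j, d, True)"
    using assms unfolding completes_def by (cases "segs n A pr p i") auto
  then have "d = p j - processed (hist n A pr p i) j"
    unfolding segs_def by (rule step_completes_remaining)
  with seg show ?thesis
    by (simp add: processed_append hist_Suc_segs del: hist.simps(2))
qed

lemma sum_processed_le_elapsed:
  assumes "finite J"
  shows "(\<Sum>j\<in>J. processed (hist n A pr p k) j) \<le> elapsed n A pr p k"
proof -
  have single: "(\<Sum>j\<in>J. if fst x = Some j then seg_len x else 0) \<le> seg_len x"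
    if "seg_len x \<ge> 0" for x :: seg
    using that assms by (cases "fst x") (simp_all add: sum.delta')
  have "(\<Sum>j\<in>J. processed (hist n A pr p k) j)
      = (\<Sum>i<k. \<Sum>j\<in>J. if fst (segs n A pr p i) = Some j then seg_len (segs n A pr p i) else 0)"
    unfolding processed_hist by (rule sum.swap)
  also have "\<dots> \<le> elapsed n A pr p k"
    unfolding elapsed_def by (intro sum_mono single seg_len_segs_nonneg)
  finally show ?thesis .
qed

lemma completed_subset: "completed n A pr p k \<subseteq> {..<n}"
  unfolding completed_def completes_def by (auto dest: fst_segs_lessD)

lemma started_mono: "k \<le> k' \<Longrightarrow> started n A pr p k \<subseteq> started n A pr p k'"
  unfolding started_def by (auto intro: less_le_trans)

lemma started_subset: "started n A pr p k \<subseteq> {..<n}"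
  unfolding started_def by (auto dest: fst_segs_lessD)

lemma sum_completed_le_elapsed: "sum p (completed n A pr p k) \<le> elapsed n A pr p k"
proof -
  have fin: "finite (completed n A pr p k)"
    by (rule finite_subset[OF completed_subset]) simp
  have "sum p (completed n A pr p k) \<le> (\<Sum>j\<in>completed n A pr p k. processed (hist n A pr p k) j)"
  proof (rule sum_mono)
    fix j assume "j \<in> completed n A pr p k"
    then obtain i where "i < k" "completes n A pr p j i"
      unfolding completed_def by blast
    then have "processed (hist n A pr p (Suc i)) j \<le> processed (hist n A pr p k) j"
      by (intro processed_hist_mono) simp
    with \<open>completes n A pr p j i\<close> show "p j \<le> processed (hist n A pr p k) j"
      by (simp only: processed_completes)
  qed
  also have "\<dots> \<le> elapsed n A pr p k"
    using fin by (rule sum_processed_le_elapsed)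
  finally show ?thesis .
qed

lemma processed_not_started:
  "j \<notin> started n A pr p k \<Longrightarrow> processed (hist n A pr p k) j = 0"
  unfolding processed_hist started_def by (intro sum.neutral) auto

lemma compl_time_nonneg: "compl_time n A pr p j \<ge> 0"
  unfolding compl_time_def by (auto intro!: sum_nonneg seg_len_segs_nonneg)

lemma total_cost_nonneg: "total_cost n A pr p \<ge> 0"
  unfolding total_cost_def by (intro sum_nonneg compl_time_nonneg)

lemma compl_time_ge_elapsed:
  assumes "j \<notin> started n A pr p N"
  shows "ereal (elapsed n A pr p N) \<le> compl_time n A pr p j"
proof (cases "\<exists>i. completes n A pr p j i")
  case True
  define L where "L = (LEAST i. completes n A pr p j i)"
  have "completes n A pr p j L"
    unfolding L_def using True by (rule LeastI_ex)
  then have "N \<le> L"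
    using assms unfolding completes_def started_def by (metis (mono_tags, lifting) mem_Collect_eq not_le)
  then have "elapsed n A pr p N \<le> (\<Sum>k\<le>L. seg_len (segs n A pr p k))"
    unfolding elapsed_def by (intro sum_mono2) (auto simp: seg_len_segs_nonneg)
  then show ?thesis
    using True by (simp add: compl_time_def L_def)
qed (simp add: compl_time_def)

lemma total_cost_infinite_if_never_completes:
  assumes "j < n" "\<nexists>i. completes n A pr p j i"
  shows "total_cost n A pr p = \<infinity>"
proof -
  have "compl_time n A pr p j = \<infinity>"
    using assms(2) by (simp add: compl_time_def)
  then show ?thesis
    unfolding total_cost_def using assms(1) compl_time_nonneg
    by (subst sum_Pinfty) auto
qed

lemma total_cost_infinite_if_elapsed_bounded:
  assumes "\<And>k. elapsed n A pr p k < sum p {..<n}"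
  shows "total_cost n A pr p = \<infinity>"
proof (rule ccontr)
  assume "total_cost n A pr p \<noteq> \<infinity>"
  then have "\<forall>j\<in>{..<n}. \<exists>i. completes n A pr p j i"
    using total_cost_infinite_if_never_completes by blast
  then obtain g where g: "\<And>j. j < n \<Longrightarrow> completes n A pr p j (g j)"
    by (metis lessThan_iff)
  define K where "K = Suc (\<Sum>j<n. g j)"
  have "g j < K" if "j < n" for j
    unfolding K_def using that by (simp add: le_imp_less_Suc member_le_sum)
  then have "{..<n} \<subseteq> completed n A pr p K"
    unfolding completed_def using g by blast
  then have "completed n A pr p K = {..<n}"
    using completed_subset by blast
  then show False
    using sum_completed_le_elapsed[of p n A pr K] assms[of K] by simp
qed

section \<open>Offline schedules\<close>

lemma opt_cost_nonneg: "opt_cost n p \<ge> 0"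
  unfolding opt_cost_def by (auto intro!: Inf_greatest total_cost_nonneg)

lemma opt_cost_le_plan: "opt_cost n p \<le> total_cost n (\<lambda>_ h. \<sigma> (length h)) p p"
  unfolding opt_cost_def by (rule Inf_lower) blast

text \<open>The offline optimum replays the decisions the algorithm takes on the true sizes.\<close>
lemma opt_cost_le_total_cost: "opt_cost n p \<le> total_cost n A pr p"
proof -
  let ?B = "\<lambda>_ h. A pr (hist n A pr p (length h))"
  have "hist n ?B p p k = hist n A pr p k" for k
    by (induction k) (simp_all add: Let_def)
  then have same_segs: "segs n ?B p p = segs n A pr p"
    by (simp add: segs_def fun_eq_iff)
  have "total_cost n ?B p p = total_cost n A pr p"
    unfolding total_cost_def compl_time_def completes_def same_segs ..
  then show ?thesis
    using opt_cost_le_plan[of n p "\<lambda>i. A pr (hist n A pr p i)"] by simp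
qed

definition run_in_order :: "nat list \<Rightarrow> (nat \<Rightarrow> real) \<Rightarrow> nat \<Rightarrow> nat option \<times> real" where
  "run_in_order L q i = (if i < length L then (Some (L ! i), q (L ! i)) else (None, 1))"

locale job_order =
  fixes n :: nat and L :: "nat list" and q :: "nat \<Rightarrow> real"
  assumes distinct_order: "distinct L"
    and set_order: "set L = {..<n}"
    and sizes_pos: "\<And>j. j < n \<Longrightarrow> q j > 0"
begin

abbreviation plan :: alg where
  "plan \<equiv> \<lambda>_ h. run_in_order L q (length h)"

lemma length_order: "length L = n"
  using distinct_card[OF distinct_order] set_order by simp

lemma segs_plan: "i < n \<Longrightarrow> segs n plan q q i = (Some (L ! i), q (L ! i), True)"
proof (induction i rule: less_induct)
  case (less i)
  have "L ! i \<notin> started n plan q q i"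
  proof
    assume "L ! i \<in> started n plan q q i"
    then obtain k where "k < i" "fst (segs n plan q q k) = Some (L ! i)"
      unfolding started_def by blast
    then have "L ! k = L ! i"
      using less by simp
    then show False
      using \<open>k < i\<close> less.prems distinct_order length_order by (simp add: nth_eq_iff_index_eq)
  qed
  then have "processed (hist n plan q q i) (L ! i) = 0"
    by (rule processed_not_started)
  moreover have "L ! i < n"
    using less.prems length_order set_order nth_mem by (metis lessThan_iff)
  moreover have "q (L ! i) > 0"
    using calculation(2) by (rule sizes_pos)
  ultimately show ?case
    using less.prems length_order by (simp add: segs_def step_def run_in_order_def)
qed

lemma compl_time_plan: "i < n \<Longrightarrow> compl_time n plan q q (L ! i) = ereal (\<Sum>k\<le>i. q (L ! k))"
proof -
  assume i: "i < n"
  have completes: "completes n plan q q (L ! i) i"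
    using segs_plan[OF i] by (simp add: completes_def)
  have "i \<le> k" if "completes n plan q q (L ! i) k" for k
  proof (rule ccontr)
    assume "\<not> i \<le> k"
    then have "L ! k = L ! i"
      using that i segs_plan[of k] by (simp add: completes_def)
    then show False
      using \<open>\<not> i \<le> k\<close> i distinct_order length_order by (simp add: nth_eq_iff_index_eq)
  qed
  then have "(LEAST k. completes n plan q q (L ! i) k) = i"
    using completes by (intro Least_equality)
  moreover have "(\<Sum>k\<le>i. seg_len (segs n plan q q k)) = (\<Sum>k\<le>i. q (L ! k))"
    using i by (intro sum.cong) (simp_all add: segs_plan)
  ultimately show ?thesis
    using completes by (auto simp: compl_time_def)
qed

lemma opt_cost_le_order: "opt_cost n q \<le> ereal (\<Sum>i<n. \<Sum>k\<le>i. q (L ! k))"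
proof -
  have "bij_betw ((!) L) {..<n} {..<n}"
    using distinct_order set_order length_order by (intro bij_betw_nth) simp_all
  then have "total_cost n plan q q = (\<Sum>i<n. compl_time n plan q q (L ! i))"
    unfolding total_cost_def by (rule sum.reindex_bij_betw[symmetric])
  also have "\<dots> = ereal (\<Sum>i<n. \<Sum>k\<le>i. q (L ! k))"
    by (simp add: compl_time_plan)
  finally show ?thesis
    using opt_cost_le_plan[of n q "run_in_order L q"] by simp
qed

end

text \<open>The jobs outside \<open>S\<close> are the tiny ones.\<close>
definition small_first :: "nat set \<Rightarrow> nat \<Rightarrow> nat list" where
  "small_first S n = filter (\<lambda>j. j \<notin> S) [0..<n] @ filter (\<lambda>j. j \<in> S) [0..<n]"

lemma distinct_small_first: "distinct (small_first S n)"
  unfolding small_first_def by auto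

lemma set_small_first: "set (small_first S n) = {..<n}"
  unfolding small_first_def by auto

lemma nth_small_first_notin:
  assumes "S \<subseteq> {..<n}" "k < n - card S"
  shows "small_first S n ! k \<notin> S"
proof -
  let ?small = "filter (\<lambda>j. j \<notin> S) [0..<n]" and ?large = "filter (\<lambda>j. j \<in> S) [0..<n]"
  have "set ?large = S"
    using assms(1) by auto
  then have "length ?large = card S"
    using distinct_card[of ?large] by simp
  moreover have "length (small_first S n) = n"
    using distinct_card[OF distinct_small_first] by (simp add: set_small_first)
  ultimately have k: "k < length ?small"
    using assms(2) unfolding small_first_def by simp
  then have "?small ! k \<in> set ?small"
    by (rule nth_mem)
  then show ?thesis
    using k unfolding small_first_def by (simp add: nth_append)
qed

lemma sum_two_sizes_le:
  fixes \<epsilon> :: real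
  assumes "S \<subseteq> {..<n}" "\<epsilon> \<ge> 0"
  shows "(\<Sum>j<n. if j \<in> S then 1 else \<epsilon>) \<le> real n * \<epsilon> + real (card S)"
proof -
  have "(\<Sum>j<n. if j \<in> S then 1 else \<epsilon>) \<le> (\<Sum>j<n. \<epsilon> + (if j \<in> S then 1 else 0))"
    using assms(2) by (intro sum_mono) simp
  also have "\<dots> = real n * \<epsilon> + real (card S)"
    using assms(1) by (simp add: sum.distrib sum.If_cases Int_absorb1)
  finally show ?thesis .
qed

lemma prefix_sum_small_first_le:
  fixes \<epsilon> :: real
  assumes S: "S \<subseteq> {..<n}" and \<epsilon>: "\<epsilon> > 0" and "i < n"
  defines "q \<equiv> \<lambda>j. if j \<in> S then 1 else \<epsilon>"
  shows "(\<Sum>k\<le>i. q (small_first S n ! k))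
    \<le> real n * \<epsilon> + (if n - card S \<le> i then real (card S) else 0)"
proof (cases "n - card S \<le> i")
  case True
  have "length (small_first S n) = n"
    using distinct_card[OF distinct_small_first] by (simp add: set_small_first)
  then have "bij_betw ((!) (small_first S n)) {..<n} {..<n}"
    by (intro bij_betw_nth distinct_small_first) (simp_all add: set_small_first)
  then have "(\<Sum>k<n. q (small_first S n ! k)) = (\<Sum>j<n. q j)"
    by (rule sum.reindex_bij_betw)
  moreover have "(\<Sum>k\<le>i. q (small_first S n ! k)) \<le> (\<Sum>k<n. q (small_first S n ! k))"
    using \<open>i < n\<close> \<epsilon> by (intro sum_mono2) (auto simp: q_def)
  ultimately have "(\<Sum>k\<le>i. q (small_first S n ! k)) \<le> real n * \<epsilon> + real (card S)"
    using sum_two_sizes_le[OF S less_imp_le[OF \<epsilon>]] unfolding q_def by linarith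
  then show ?thesis
    using True by simp
next
  case False
  then have "q (small_first S n ! k) = \<epsilon>" if "k \<le> i" for k
    using that nth_small_first_notin[OF S, of k] unfolding q_def by simp
  then have "(\<Sum>k\<le>i. q (small_first S n ! k)) = real (Suc i) * \<epsilon>"
    by simp
  also have "\<dots> \<le> real n * \<epsilon>"
    using \<open>i < n\<close> \<epsilon> by (intro mult_right_mono) simp_all
  finally show ?thesis
    using False by simp
qed

lemma opt_cost_two_sizes:
  fixes \<epsilon> :: real
  assumes S: "S \<subseteq> {..<n}" and \<epsilon>: "\<epsilon> > 0"
  shows "opt_cost n (\<lambda>j. if j \<in> S then 1 else \<epsilon>)
    \<le> ereal (real n * real n * \<epsilon> + real (card S) * real (card S))"
proof -
  define q where "q = (\<lambda>j. if j \<in> S then 1 else \<epsilon>)"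
  define m where "m = n - card S"
  interpret job_order n "small_first S n" q
    using \<epsilon> by unfold_locales (simp_all add: distinct_small_first set_small_first q_def)
  have "card S \<le> n"
    using S by (metis card_lessThan card_mono finite_lessThan)
  then have "n - m = card S"
    unfolding m_def by simp
  have "(\<Sum>i<n. \<Sum>k\<le>i. q (small_first S n ! k))
      \<le> (\<Sum>i<n. real n * \<epsilon> + (if m \<le> i then real (card S) else 0))"
    unfolding q_def m_def by (intro sum_mono prefix_sum_small_first_le[OF S \<epsilon>]) simp
  also have "\<dots> = real n * real n * \<epsilon> + real (card S) * real (card S)"
  proof -
    have "{..<n} \<inter> {i. m \<le> i} = {m..<n}"
      by auto
    with \<open>n - m = card S\<close> show ?thesis
      by (simp add: sum.distrib sum.If_cases)
  qed
  finally show ?thesis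
    using opt_cost_le_order unfolding q_def by (meson ereal_less_eq(3) order_trans)
qed

definition tiny_size :: "nat \<Rightarrow> real" where
  "tiny_size n = 1 / (real n * real n + 1)"

lemma tiny_size_pos: "0 < tiny_size n"
  unfolding tiny_size_def by (simp add: add_nonneg_pos)

lemma tiny_size_le_one: "tiny_size n \<le> 1"
  unfolding tiny_size_def by (simp add: add_nonneg_pos)

lemma square_mult_tiny_size_le: "real n * real n * tiny_size n \<le> 1"
proof -
  have pos: "0 < real n * real n + 1"
    by (simp add: add_nonneg_pos)
  have "real n * real n * tiny_size n = real n * real n / (real n * real n + 1)"
    unfolding tiny_size_def by simp
  also have "\<dots> \<le> 1"
    unfolding divide_le_eq_1_pos[OF pos] by simp
  finally show ?thesis .
qed

lemma opt_cost_adversary_le: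
  assumes "S \<subseteq> {..<n}" "card S \<le> 2 * s"
  shows "opt_cost n (\<lambda>j. if j \<in> S then 1 else tiny_size n) \<le> ereal (1 + 4 * real s * real s)"
proof -
  have "opt_cost n (\<lambda>j. if j \<in> S then 1 else tiny_size n)
      \<le> ereal (real n * real n * tiny_size n + real (card S) * real (card S))"
    using assms(1) tiny_size_pos by (rule opt_cost_two_sizes)
  also have "\<dots> \<le> ereal (1 + 4 * real s * real s)"
  proof -
    have "real (card S) * real (card S) \<le> (2 * real s) * (2 * real s)"
      using assms(2) by (intro mult_mono) simp_all
    then show ?thesis
      using square_mult_tiny_size_le[of n] by simp
  qed
  finally show ?thesis .
qed

section \<open>Indistinguishability and preemptions\<close>

lemma step_cong:
  assumes "\<And>j. fst a = Some j \<Longrightarrow> j < n \<Longrightarrow> p j = p' j"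
  shows "step n p a h = step n p' a h"
  using assms unfolding step_def Let_def by (auto split: option.splits)

text \<open>A job the algorithm picks for the first time has positive size and is executed, so the
  sizes of jobs never started cannot influence the run.\<close>
lemma hist_eq_if_agree_on_started:
  assumes pos: "\<And>j. j < n \<Longrightarrow> p j > 0"
    and agree: "\<And>j. j \<in> started n A pr p N \<Longrightarrow> q j = p j"
  shows "k \<le> N \<Longrightarrow> hist n A pr q k = hist n A pr p k"
proof (induction k)
  case (Suc k)
  let ?h = "hist n A pr p k"
  have "j \<in> started n A pr p (Suc k)" if "fst (A pr ?h) = Some j" "j < n" for j
  proof (rule ccontr)
    assume not_started: "j \<notin> started n A pr p (Suc k)"
    then have "processed ?h j = 0"
      using started_mono[of k "Suc k" n A pr p] by (intro processed_not_started) auto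
    then have "fst (segs n A pr p k) = Some j"
      using that pos[of j] by (simp add: segs_def step_def Let_def)
    then show False
      using not_started unfolding started_def by blast
  qed
  then have "step n q (A pr ?h) ?h = step n p (A pr ?h) ?h"
    using Suc.prems started_mono[of "Suc k" N n A pr p] by (intro step_cong agree) blast
  then show ?case
    using Suc by (simp add: Let_def)
qed simp

lemma segs_eq_if_agree_on_started:
  assumes "\<And>j. j < n \<Longrightarrow> p j > 0" "\<And>j. j \<in> started n A pr p N \<Longrightarrow> q j = p j" "i < N"
  shows "segs n A pr q i = segs n A pr p i"
proof -
  have "Suc i \<le> N"
    using assms(3) by simp
  then have "hist n A pr q (Suc i) = hist n A pr p (Suc i)"
    using assms(1,2) by (rule hist_eq_if_agree_on_started[rotated 2])
  then show ?thesis
    by (simp add: hist_Suc_segs del: hist.simps(2))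
qed

definition last_run :: "nat \<Rightarrow> alg \<Rightarrow> (nat \<Rightarrow> real) \<Rightarrow> (nat \<Rightarrow> real) \<Rightarrow> nat \<Rightarrow> nat \<Rightarrow> nat" where
  "last_run n A pr p k j = Max {i. i < k \<and> fst (segs n A pr p i) = Some j}"

lemma last_run:
  assumes "j \<in> started n A pr p k"
  shows "last_run n A pr p k j < k" "fst (segs n A pr p (last_run n A pr p k j)) = Some j"
    "\<And>i. i < k \<Longrightarrow> fst (segs n A pr p i) = Some j \<Longrightarrow> i \<le> last_run n A pr p k j"
proof -
  let ?I = "{i. i < k \<and> fst (segs n A pr p i) = Some j}"
  have "finite ?I" "?I \<noteq> {}"
    using assms unfolding started_def by auto
  then show "last_run n A pr p k j < k" "fst (segs n A pr p (last_run n A pr p k j)) = Some j"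
    "\<And>i. i < k \<Longrightarrow> fst (segs n A pr p i) = Some j \<Longrightarrow> i \<le> last_run n A pr p k j"
    using Max_in[of ?I] Max_ge[of ?I] unfolding last_run_def by auto
qed

lemma last_run_preempt_point:
  assumes "j \<in> started n A pr p (Suc M)" "j \<notin> completed n A pr p M" "fst (segs n A pr p M) \<noteq> Some j"
  shows "last_run n A pr p (Suc M) j \<in> preempt_points n A pr p"
proof -
  let ?x = "last_run n A pr p (Suc M) j"
  note last = last_run[OF assms(1)]
  have "?x < M"
    using last(1,2) assms(3) less_Suc_eq by auto
  then have "\<not> snd (snd (segs n A pr p ?x))"
    using last(2) assms(2) unfolding completed_def completes_def by blast
  moreover have "fst (segs n A pr p (Suc ?x)) \<noteq> Some j"
    using last(3)[of "Suc ?x"] \<open>?x < M\<close> by auto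
  ultimately show ?thesis
    unfolding preempt_points_def using last(2) by blast
qed

lemma card_started_le:
  assumes "preempt_le n A pr p s"
  shows "card (started n A pr p (Suc M)) \<le> card (completed n A pr p M) + s + 1"
proof -
  define S where "S = started n A pr p (Suc M)"
  define C where "C = completed n A pr p M"
  define R where "R = set_option (fst (segs n A pr p M))"
  have preempted: "last_run n A pr p (Suc M) ` (S - C - R) \<subseteq> preempt_points n A pr p"
  proof (rule image_subsetI)
    fix j assume j: "j \<in> S - C - R"
    then have "fst (segs n A pr p M) \<noteq> Some j"
      unfolding R_def by force
    with j show "last_run n A pr p (Suc M) j \<in> preempt_points n A pr p"
      unfolding S_def C_def by (intro last_run_preempt_point) simp_all
  qed
  have "inj_on (last_run n A pr p (Suc M)) (S - C - R)"
  proof (rule inj_onI)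
    fix i j assume "i \<in> S - C - R" "j \<in> S - C - R"
      and "last_run n A pr p (Suc M) i = last_run n A pr p (Suc M) j"
    then show "i = j"
      using last_run(2)[of i n A pr p "Suc M"] last_run(2)[of j n A pr p "Suc M"]
      unfolding S_def by (metis DiffD1 option.inject)
  qed
  then have "card (S - C - R) = card (last_run n A pr p (Suc M) ` (S - C - R))"
    by (simp add: card_image)
  also have "\<dots> \<le> card (preempt_points n A pr p)"
    using preempted assms unfolding preempt_le_def by (intro card_mono) simp_all
  also have "\<dots> \<le> s"
    using assms unfolding preempt_le_def by simp
  finally have "card (S - C - R) \<le> s" .
  moreover have "card R \<le> 1"
    unfolding R_def by (cases "fst (segs n A pr p M)") simp_all
  moreover have "card S \<le> card C + card (S - C - R) + card R"
  proof -
    have "finite C" "finite S"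
      unfolding C_def S_def by (rule finite_subset[OF completed_subset] finite_subset[OF started_subset], simp)+
    then have "card S \<le> card (C \<union> (S - C - R) \<union> R)"
      unfolding R_def by (intro card_mono) auto
    also have "\<dots> \<le> card C + card (S - C - R) + card R"
      using card_Un_le[of C "S - C - R"] card_Un_le[of "C \<union> (S - C - R)" R] by linarith
    finally show ?thesis .
  qed
  ultimately show ?thesis
    unfolding S_def C_def by linarith
qed

section \<open>The adversary\<close>

lemma total_cost_ge_unstarted:
  assumes pos: "\<And>j. j < n \<Longrightarrow> p j > 0" and agree: "\<And>j. j \<in> started n A pr p N \<Longrightarrow> q j = p j"
  shows "ereal (real (n - card (started n A pr p N)) * elapsed n A pr p N) \<le> total_cost n A pr q"
proof -
  let ?S = "started n A pr p N"
  have "segs n A pr q i = segs n A pr p i" if "i < N" for i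
    using pos agree that by (rule segs_eq_if_agree_on_started)
  then have "started n A pr q N = ?S" "elapsed n A pr q N = elapsed n A pr p N"
    unfolding started_def elapsed_def by auto
  then have late: "ereal (elapsed n A pr p N) \<le> compl_time n A pr q j" if "j \<notin> ?S" for j
    using compl_time_ge_elapsed[of j n A pr q N] that by simp
  have "card ({..<n} - ?S) = n - card ?S"
    using started_subset[of n A pr p N] by (metis card_Diff_subset card_lessThan finite_lessThan finite_subset)
  then have "ereal (real (n - card ?S) * elapsed n A pr p N) = (\<Sum>j\<in>{..<n} - ?S. ereal (elapsed n A pr p N))"
    by simp
  also have "\<dots> \<le> (\<Sum>j\<in>{..<n} - ?S. compl_time n A pr q j)"
    using late by (intro sum_mono) simp
  also have "\<dots> \<le> total_cost n A pr q"
    unfolding total_cost_def using compl_time_nonneg by (intro sum_mono2) auto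
  finally show ?thesis .
qed

lemma first_reach_started_le:
  assumes preempt: "preempt_le n A (\<lambda>_. 1) (\<lambda>_. 1) s" and "1 \<le> s"
    and reached: "real s \<le> elapsed n A (\<lambda>_. 1) (\<lambda>_. 1) K"
  obtains N where "real s \<le> elapsed n A (\<lambda>_. 1) (\<lambda>_. 1) N"
    and "card (started n A (\<lambda>_. 1) (\<lambda>_. 1) N) \<le> 2 * s"
proof -
  let ?u = "\<lambda>_::nat. 1::real"
  define N where "N = (LEAST k. real s \<le> elapsed n A ?u ?u k)"
  have reached_N: "real s \<le> elapsed n A ?u ?u N"
    unfolding N_def using reached by (rule LeastI)
  then have "N \<noteq> 0"
    using \<open>1 \<le> s\<close> by (cases N) (simp_all add: elapsed_def)
  then obtain M where M: "N = Suc M"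
    using not0_implies_Suc by blast
  have "elapsed n A ?u ?u M < real s"
    using not_less_Least[of M "\<lambda>k. real s \<le> elapsed n A ?u ?u k"] M unfolding N_def by simp
  then have "real (card (completed n A ?u ?u M)) < real s"
    using sum_completed_le_elapsed[of ?u n A ?u M] by simp
  then have "card (started n A ?u ?u N) \<le> 2 * s"
    unfolding M using card_started_le[OF preempt, of M] by linarith
  with reached_N show ?thesis
    by (rule that)
qed

lemma unit_run_adversary:
  assumes "preempt_le n A (\<lambda>_. 1) (\<lambda>_. 1) s" "1 \<le> s"
    and "real s \<le> elapsed n A (\<lambda>_. 1) (\<lambda>_. 1) K"
  shows "\<exists>q. (\<forall>j. 0 < q j \<and> q j \<le> 1) \<and>
    ereal (real s * (real n - 2 * real s)) \<le> total_cost n A (\<lambda>_. 1) q \<and>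
    opt_cost n q \<le> ereal (1 + 4 * real s * real s)"
proof -
  let ?u = "\<lambda>_::nat. 1::real"
  obtain N where reached: "real s \<le> elapsed n A ?u ?u N"
    and card_S: "card (started n A ?u ?u N) \<le> 2 * s"
    using first_reach_started_le[OF assms] .
  define S where "S = started n A ?u ?u N"
  define q where "q = (\<lambda>j. if j \<in> S then 1 else tiny_size n)"
  have "real n - 2 * real s \<le> real (n - card S)"
    using card_S unfolding S_def by (cases "card S \<le> n") (simp_all add: of_nat_diff)
  then have "real s * (real n - 2 * real s) \<le> real (n - card S) * real s"
    by (metis mult.commute mult_right_mono of_nat_0_le_iff)
  also have "\<dots> \<le> real (n - card S) * elapsed n A ?u ?u N"
    using reached by (intro mult_left_mono) simp_all
  also have "ereal \<dots> \<le> total_cost n A ?u q"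
    unfolding S_def q_def by (rule total_cost_ge_unstarted) simp_all
  finally have "ereal (real s * (real n - 2 * real s)) \<le> total_cost n A ?u q"
    by simp
  moreover have "opt_cost n q \<le> ereal (1 + 4 * real s * real s)"
    unfolding q_def S_def using started_subset card_S by (rule opt_cost_adversary_le)
  moreover have "\<forall>j. 0 < q j \<and> q j \<le> 1"
    using tiny_size_pos tiny_size_le_one by (simp add: q_def)
  ultimately show ?thesis
    by blast
qed

lemma lower_bound_arith:
  fixes n s :: real
  assumes "1 \<le> s" "7 * s \<le> 3 * n"
  shows "1 / 24 * (n - s) / s * (1 + 4 * s * s) \<le> s * (n - 2 * s)"
proof -
  have "1 * 1 \<le> s * s"
    using assms(1) by (intro mult_mono) simp_all
  moreover have "0 \<le> (n - s) / s"
    using assms by simp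
  ultimately have "1 / 24 * (n - s) / s * (1 + 4 * s * s) \<le> 1 / 24 * (n - s) / s * (5 * s * s)"
    by (intro mult_left_mono) simp_all
  also have "\<dots> = 5 / 24 * s * (n - s)"
    using assms(1) by (simp add: field_simps)
  also have "\<dots> \<le> s * (n - 2 * s)"
  proof -
    have "0 \<le> s * (19 * n - 43 * s)"
      using assms by (intro mult_nonneg_nonneg) simp_all
    then show ?thesis
      by (simp add: field_simps)
  qed
  finally show ?thesis .
qed

lemma unit_run_lower_bound:
  assumes "1 \<le> s" and preempt: "preempt_le n A (\<lambda>_. 1) (\<lambda>_. 1) s"
  shows "\<exists>p pr. (\<forall>j<n. p j > 0 \<and> pr j \<ge> p j) \<and>
    total_cost n A pr p \<ge> ereal (1 / 24 * (real n - real s) / real s) * opt_cost n p"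
proof -
  let ?u = "\<lambda>_::nat. 1::real" and ?f = "1 / 24 * (real n - real s) / real s"
  consider (few_jobs) "3 * n < 7 * s"
    | (zeno) "7 * s \<le> 3 * n" "\<forall>k. elapsed n A ?u ?u k < real s"
    | (reached) K where "7 * s \<le> 3 * n" "real s \<le> elapsed n A ?u ?u K"
    by (meson not_le)
  then show ?thesis
  proof cases
    case few_jobs
    then have "ereal ?f * opt_cost n ?u \<le> ereal 1 * opt_cost n ?u"
      using \<open>1 \<le> s\<close> by (intro ereal_mult_right_mono) (simp_all add: field_simps opt_cost_nonneg)
    also have "\<dots> \<le> total_cost n A ?u ?u"
      by (simp add: opt_cost_le_total_cost)
    finally show ?thesis
      by (intro exI[of _ ?u]) simp
  next
    case zeno
    have "real s \<le> sum ?u {..<n}"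
      using zeno(1) by simp
    then have "total_cost n A ?u ?u = \<infinity>"
      using zeno(2) by (intro total_cost_infinite_if_elapsed_bounded) (meson less_le_trans)
    then show ?thesis
      by (intro exI[of _ ?u]) simp
  next
    case reached
    obtain q where q: "\<forall>j. 0 < q j \<and> q j \<le> 1"
      and cost: "ereal (real s * (real n - 2 * real s)) \<le> total_cost n A ?u q"
      and opt: "opt_cost n q \<le> ereal (1 + 4 * real s * real s)"
      using unit_run_adversary[OF preempt \<open>1 \<le> s\<close> reached(2)] by blast
    have "ereal ?f * opt_cost n q \<le> ereal ?f * ereal (1 + 4 * real s * real s)"
      using reached(1) opt by (intro ereal_mult_left_mono) simp_all
    also have "\<dots> \<le> ereal (real s * (real n - 2 * real s))"
      using lower_bound_arith[of "real s" "real n"] reached(1) \<open>1 \<le> s\<close> by simp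
    finally show ?thesis
      using q cost by (meson order_trans)
  qed
qed

theorem mainTheorem5:
  shows "\<exists>c::real. c > 0 \<and>
    (\<forall>(n::nat) (s::nat) (A::alg).
       online_alg A \<longrightarrow> s \<ge> 1 \<longrightarrow>
       (\<forall>p pr. (\<forall>j<n. p j > 0 \<and> pr j = p j) \<longrightarrow> preempt_le n A pr p s) \<longrightarrow>
       (\<exists>p pr. (\<forall>j<n. p j > 0 \<and> pr j \<ge> p j) \<and>
          total_cost n A pr p \<ge> ereal (c * (real n - real s) / real s) * opt_cost n p))"
proof (rule exI[of _ "1 / 24"], intro conjI allI impI)
  show "(0::real) < 1 / 24"
    by simp
  fix n s :: nat and A :: alg
  assume "1 \<le> s" and exact: "\<forall>p pr. (\<forall>j<n. p j > 0 \<and> pr j = p j) \<longrightarrow> preempt_le n A pr p s"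
  then have "preempt_le n A (\<lambda>_. 1) (\<lambda>_. 1) s"
    by simp
  with \<open>1 \<le> s\<close> show "\<exists>p pr. (\<forall>j<n. p j > 0 \<and> pr j \<ge> p j) \<and>
      total_cost n A pr p \<ge> ereal (1 / 24 * (real n - real s) / real s) * opt_cost n p"
    by (rule unit_run_lower_bound)
qed

end
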